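(* Let $\Theta\in\mathbb{R}^d$ denote a parameter vector and let $\ell:\mathcal{Z}\times\mathbb{R}^d\to[0,\infty)$ be a non-negative loss, differentiable in $\Theta$, with gradient $\nabla_{\Theta}\ell(z;\Theta)$. Let $(p^t)_{t\ge 0}$ and $p^*$ be probability densities on $\mathcal{Z}$ (with respect to a common reference measure $dz$), and set $c^t\triangleq\int|p^t(z)-p^*(z)|\,dz$. Assume: (i) (finite variance) there is $G>0$ such that for all $t$ and all $\Theta$, $\mathbb{E}_{Z\sim p^t}\big[\Vert\nabla_{\Theta}\ell(Z;\Theta)\Vert^2\big]\le G$; (ii) (convergence of the input distribution) $\sum_{t} c^t<\infty$. Then for all $\Theta$, $\mathbb{E}_{Z\sim p^*}\big[\Vert\nabla_{\Theta}\ell(Z;\Theta)\Vert^2\big]\le G$.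
   Context: This is the setting of a single module $j>1$ in a layer-wise ("greedy") training scheme: $p^t$ is the time-varying density at step $t$ of the input sample $Z=(X,Y)$ fed to the module (the output of the previous, still-training module together with the label), $p^*$ is the density of the previous module's output at convergence, and $\ell$ is the composition of the loss with the module and its auxiliary network, whose joint parameters are $\Theta$. *)

theory Defs
  imports "HOL-Analysis.Analysis"
begin

definition is_density :: "'z measure \<Rightarrow> ('z \<Rightarrow> real) \<Rightarrow> bool" where
  "is_density M p \<longleftrightarrow> p \<in> borel_measurable M \<and> (\<forall>z\<in>space M. 0 \<le> p z)
     \<and> integrable M p \<and> (\<integral>z. p z \<partial>M) = 1"

definition dens_expect :: "'z measure \<Rightarrow> ('z \<Rightarrow> real) \<Rightarrow> ('z \<Rightarrow> real) \<Rightarrow> ennreal" where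
  "dens_expect M p f = (\<integral>\<^sup>+ z. ennreal (p z * f z) \<partial>M)"

definition L1_dist :: "'z measure \<Rightarrow> ('z \<Rightarrow> real) \<Rightarrow> ('z \<Rightarrow> real) \<Rightarrow> real" where
  "L1_dist M p q = (\<integral>z. \<bar>p z - q z\<bar> \<partial>M)"

end

theory Submission
  imports Defs
begin

text \<open>
  Since \<open>\<integral> \<Sum>\<^sub>t |p\<^sup>t - p\<^sup>*| dz = \<Sum>\<^sub>t c\<^sup>t < \<infinity>\<close>, the series \<open>\<Sum>\<^sub>t |p\<^sup>t(z) - p\<^sup>*(z)|\<close> converges
  for almost every \<open>z\<close>, so \<open>p\<^sup>t \<rightarrow> p\<^sup>*\<close> almost everywhere. Fatou's lemma applied to
  \<open>p\<^sup>t \<parallel>\<nabla>\<ell>\<parallel>\<^sup>2\<close> then bounds \<open>\<bbbE>\<^sub>p\<^sub>*\<parallel>\<nabla>\<ell>\<parallel>\<^sup>2\<close> by \<open>liminf\<^sub>t \<bbbE>\<^sub>p\<^sub>t\<parallel>\<nabla>\<ell>\<parallel>\<^sup>2 \<le> G\<close>.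
\<close>

lemma nn_integral_suminf_abs_diff_eq:
  assumes p_int: "\<And>t. integrable M (p t)" and q_int: "integrable M q"
    and summ: "summable (\<lambda>t. L1_dist M (p t) q)"
  shows "(\<integral>\<^sup>+ z. (\<Sum>t. ennreal \<bar>p t z - q z\<bar>) \<partial>M) = ennreal (\<Sum>t. L1_dist M (p t) q)"
proof -
  have term_eq: "(\<integral>\<^sup>+ z. ennreal \<bar>p t z - q z\<bar> \<partial>M) = ennreal (L1_dist M (p t) q)" for t
    unfolding L1_dist_def
    by (rule nn_integral_eq_integral) (auto intro!: Bochner_Integration.integrable_diff p_int q_int)
  have "(\<integral>\<^sup>+ z. (\<Sum>t. ennreal \<bar>p t z - q z\<bar>) \<partial>M) = (\<Sum>t. ennreal (L1_dist M (p t) q))"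
    using p_int q_int by (simp add: nn_integral_suminf term_eq)
  also have "\<dots> = ennreal (\<Sum>t. L1_dist M (p t) q)"
    by (rule suminf_ennreal2[OF _ summ]) (simp add: L1_dist_def)
  finally show ?thesis .
qed

lemma AE_tendsto_of_summable_L1_dist:
  assumes p_int: "\<And>t. integrable M (p t)" and q_int: "integrable M q"
    and summ: "summable (\<lambda>t. L1_dist M (p t) q)"
  shows "AE z in M. (\<lambda>t. p t z) \<longlonglongrightarrow> q z"
proof -
  have "AE z in M. (\<Sum>t. ennreal \<bar>p t z - q z\<bar>) \<noteq> \<infinity>"
  proof (rule nn_integral_PInf_AE)
    show "(\<lambda>z. \<Sum>t. ennreal \<bar>p t z - q z\<bar>) \<in> borel_measurable M"
      using borel_measurable_integrable[OF p_int] borel_measurable_integrable[OF q_int]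
      by measurable
  qed (simp add: nn_integral_suminf_abs_diff_eq[OF assms])
  then show ?thesis
  proof (rule AE_mp, intro AE_I2 impI)
    fix z
    assume "(\<Sum>t. ennreal \<bar>p t z - q z\<bar>) \<noteq> \<infinity>"
    then have "summable (\<lambda>t. \<bar>p t z - q z\<bar>)"
      by (intro summable_suminf_not_top) auto
    then have "(\<lambda>t. \<bar>p t z - q z\<bar>) \<longlonglongrightarrow> 0"
      by (rule summable_LIMSEQ_zero)
    then have "(\<lambda>t. p t z - q z) \<longlonglongrightarrow> 0"
      by (rule tendsto_rabs_zero_cancel)
    then show "(\<lambda>t. p t z) \<longlonglongrightarrow> q z"
      by (rule LIM_zero_cancel)
  qed
qed

lemma dens_expect_le_liminf:
  assumes p_meas: "\<And>t. p t \<in> borel_measurable M" and f_meas: "f \<in> borel_measurable M"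
    and lim: "AE z in M. (\<lambda>t. p t z) \<longlonglongrightarrow> q z"
  shows "dens_expect M q f \<le> liminf (\<lambda>t. dens_expect M (p t) f)"
proof -
  have "AE z in M. liminf (\<lambda>t. ennreal (p t z * f z)) = ennreal (q z * f z)"
    using lim by eventually_elim (intro lim_imp_Liminf tendsto_ennrealI tendsto_intros, auto)
  then have "dens_expect M q f = (\<integral>\<^sup>+ z. liminf (\<lambda>t. ennreal (p t z * f z)) \<partial>M)"
    unfolding dens_expect_def by (intro nn_integral_cong_AE) auto
  also have "\<dots> \<le> liminf (\<lambda>t. dens_expect M (p t) f)"
    unfolding dens_expect_def by (rule nn_integral_liminf) (use p_meas f_meas in measurable)
  finally show ?thesis .
qed

theorem lemma1:
  fixes M :: "'z measure"
    and loss :: "'z \<Rightarrow> 'd::euclidean_space \<Rightarrow> real"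
    and grad :: "'z \<Rightarrow> 'd \<Rightarrow> 'd"
    and p :: "nat \<Rightarrow> 'z \<Rightarrow> real"
    and pstar :: "'z \<Rightarrow> real"
    and G :: real
  assumes nonneg: "\<And>z \<theta>. z \<in> space M \<Longrightarrow> 0 \<le> loss z \<theta>"
    and grad: "\<And>z \<theta>. z \<in> space M \<Longrightarrow> (loss z has_derivative (\<lambda>h. grad z \<theta> \<bullet> h)) (at \<theta>)"
    and grad_meas: "\<And>\<theta>. (\<lambda>z. grad z \<theta>) \<in> borel_measurable M"
    and dens: "\<And>t. is_density M (p t)"
    and dens_star: "is_density M pstar"
    and G_pos: "G > 0"
    and var: "\<And>t \<theta>. dens_expect M (p t) (\<lambda>z. (norm (grad z \<theta>))\<^sup>2) \<le> ennreal G"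
    and conv: "summable (\<lambda>t. L1_dist M (p t) pstar)"
  shows "\<forall>\<theta>. dens_expect M pstar (\<lambda>z. (norm (grad z \<theta>))\<^sup>2) \<le> ennreal G"
proof
  fix \<theta>
  have p_int: "integrable M (p t)" for t
    using dens[of t] by (simp add: is_density_def)
  have pstar_int: "integrable M pstar"
    using dens_star by (simp add: is_density_def)
  have "dens_expect M pstar (\<lambda>z. (norm (grad z \<theta>))\<^sup>2)
      \<le> liminf (\<lambda>t. dens_expect M (p t) (\<lambda>z. (norm (grad z \<theta>))\<^sup>2))"
    using grad_meas[of \<theta>] p_int
    by (intro dens_expect_le_liminf AE_tendsto_of_summable_L1_dist[OF p_int pstar_int conv]) auto
  also have "\<dots> \<le> ennreal G"
    using var by (intro Liminf_le always_eventually) auto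
  finally show "dens_expect M pstar (\<lambda>z. (norm (grad z \<theta>))\<^sup>2) \<le> ennreal G" .
qed

end
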